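(* Let $X_1,\dots,X_n$ be arbitrary (possibly dependent) random variables with values in $[0,1]$, let $m\ge 2$ be an integer and $p\in[0,1]$ such that $\mathbb{E}\prod_{i\in A}X_i\le p^{|A|}$ for every $A\subseteq[n]$ with $|A|\le m$. If $m\le np$, then $$\mathbb{E}\Big(\sum_{i=1}^n X_i\Big)^m\le(2e^2np)^m,$$ and consequently $\Pr\big(\sum_i X_i\ge\alpha np\big)\le\big(\frac{2e^2}{\alpha}\big)^m$ for every $\alpha>0$. *)

theory Defs
  imports "HOL-Probability.Probability"
begin

end

theory Submission
  imports Defs
begin

text \<open>
  Expand (\<Sum>i. X i)^m as a sum over all maps f from {..<m} to the index set. Since
  0 \<le> X i \<le> 1, the term of f is at most E (\<Prod>i \<in> f ` {..<m}. X i) \<le> p^|f ` {..<m}|.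
  At most k^m maps have a given image of size k, so the m-th moment is at most
  \<Sum>k\<le>m. (n choose k) k^m p^k. Each summand is at most (e n p)^m, because
  (n choose k) p^k \<le> (n p)^k / k!, k^k / k! \<le> e^k and k \<le> m \<le> n p; the m + 1 \<le> 2^m
  summands give (2 e n p)^m. Markov's inequality for the m-th moment yields the tail bound.
\<close>

lemma power_sum_eq_sum_PiE:
  fixes a :: "'a \<Rightarrow> 'b::comm_semiring_1"
  assumes "finite I"
  shows "(\<Sum>i\<in>I. a i) ^ m = (\<Sum>f\<in>PiE {..<m} (\<lambda>_. I). \<Prod>j<m. a (f j))"
  using prod_sum_PiE[of "{..<m}" "\<lambda>_. I" "\<lambda>_. a"] assms by simp

lemma prod_comp_le_prod_image:
  fixes a :: "'b \<Rightarrow> real" and f :: "'a \<Rightarrow> 'b"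
  assumes "finite J" and a01: "\<And>i. i \<in> f ` J \<Longrightarrow> 0 \<le> a i \<and> a i \<le> 1"
  shows "(\<Prod>j\<in>J. a (f j)) \<le> (\<Prod>i\<in>f ` J. a i)"
proof -
  have "(\<Prod>j\<in>J. a (f j)) = (\<Prod>i\<in>f ` J. a i ^ card {j\<in>J. f j = i})"
    using prod.group[OF assms(1) finite_imageI[OF assms(1)] subset_refl,
        where g=f and h="\<lambda>j. a (f j)"]
    by simp
  also have "\<dots> \<le> (\<Prod>i\<in>f ` J. a i)"
  proof (intro prod_mono conjI)
    fix i assume i: "i \<in> f ` J"
    then have "card {j\<in>J. f j = i} \<ge> 1"
      using assms(1) by (auto simp: Suc_le_eq card_gt_0_iff)
    then show "a i ^ card {j\<in>J. f j = i} \<le> a i"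
      using power_decreasing[of 1 _ "a i"] a01[OF i] by simp
  qed (use a01 in simp)
  finally show ?thesis .
qed

lemma sum_PiE_power_card_image_le:
  fixes p :: real
  assumes "finite I" and "0 \<le> p"
  shows "(\<Sum>f\<in>PiE {..<m} (\<lambda>_. I). p ^ card (f ` {..<m}))
     \<le> (\<Sum>k=0..m. real (card I choose k) * real k ^ m * p ^ k)"
proof -
  let ?P = "PiE {..<m} (\<lambda>_. I)"
  let ?T = "{B. B \<subseteq> I \<and> card B \<le> m}"
  have fT: "finite ?T" by (rule finite_subset[of _ "Pow I"]) (auto simp: assms(1))
  have fP: "finite ?P" using assms(1) by (simp add: finite_PiE)
  have img: "(\<lambda>f. f ` {..<m}) ` ?P \<subseteq> ?T"
    using card_image_le[of "{..<m}"] by auto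
  have "(\<Sum>f\<in>?P. p ^ card (f ` {..<m}))
      = (\<Sum>B\<in>?T. \<Sum>f\<in>{f \<in> ?P. f ` {..<m} = B}. p ^ card (f ` {..<m}))"
    by (rule sum.group[symmetric, OF fP fT img])
  also have "\<dots> \<le> (\<Sum>B\<in>?T. real (card B) ^ m * p ^ card B)"
  proof (rule sum_mono)
    fix B assume B: "B \<in> ?T"
    have "finite B" using B assms(1) finite_subset by auto
    have "{f \<in> ?P. f ` {..<m} = B} \<subseteq> PiE {..<m} (\<lambda>_. B)"
      by auto
    then have "card {f \<in> ?P. f ` {..<m} = B} \<le> card (PiE {..<m} (\<lambda>_. B))"
      using \<open>finite B\<close> by (intro card_mono) (auto simp: finite_PiE)
    also have "\<dots> = card B ^ m"
      using \<open>finite B\<close> by (simp add: card_PiE)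
    finally have "card {f \<in> ?P. f ` {..<m} = B} \<le> card B ^ m" .
    then show "(\<Sum>f\<in>{f \<in> ?P. f ` {..<m} = B}. p ^ card (f ` {..<m})) \<le> real (card B) ^ m * p ^ card B"
      using assms(2) by (simp add: mult_right_mono flip: of_nat_power)
  qed
  also have "\<dots> = (\<Sum>k=0..m. \<Sum>B\<in>{B \<in> ?T. card B = k}. real (card B) ^ m * p ^ card B)"
    by (rule sum.group[symmetric, OF fT]) auto
  also have "\<dots> = (\<Sum>k=0..m. real (card I choose k) * real k ^ m * p ^ k)"
  proof (rule sum.cong[OF refl])
    fix k assume "k \<in> {0..m}"
    then have "{B \<in> ?T. card B = k} = {B. B \<subseteq> I \<and> card B = k}" by auto
    then show "(\<Sum>B\<in>{B \<in> ?T. card B = k}. real (card B) ^ m * p ^ card B)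
        = real (card I choose k) * real k ^ m * p ^ k"
      using n_subsets[OF assms(1), of k] by simp
  qed
  finally show ?thesis .
qed

lemma pow_div_fact_le_exp:
  fixes x :: real
  assumes "0 \<le> x"
  shows "x ^ k / fact k \<le> exp x"
proof -
  have "(\<lambda>n. x ^ n /\<^sub>R fact n) sums exp x" by (rule exp_converges)
  moreover have "(\<Sum>n\<in>{k}. x ^ n /\<^sub>R fact n) \<le> (\<Sum>n. x ^ n /\<^sub>R fact n)"
    by (rule sum_le_suminf) (use calculation assms in \<open>auto simp: sums_iff\<close>)
  ultimately show ?thesis by (simp add: sums_iff divide_inverse mult.commute)
qed

lemma choose_mult_power_le:
  fixes p :: real
  assumes "0 \<le> p" and "real m \<le> real n * p" and "k \<le> m" and "1 \<le> m"
  shows "real (n choose k) * real k ^ m * p ^ k \<le> (exp 1 * (real n * p)) ^ m"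
proof (cases "k = 0")
  case True
  then show ?thesis using assms(1,4) by (simp add: zero_power)
next
  case False
  define q where "q = real n * p"
  have "q \<ge> 0" using assms(1) by (simp add: q_def)
  have "real (n choose k) * fact k \<le> real n ^ k"
    using binomial_fact_pow[of n k] by (metis of_nat_fact of_nat_le_iff of_nat_mult of_nat_power)
  then have "real (n choose k) * fact k * p ^ k \<le> real n ^ k * p ^ k"
    using assms(1) by (intro mult_right_mono) auto
  then have "real (n choose k) * p ^ k * fact k \<le> real n ^ k * p ^ k"
    by (simp add: mult_ac)
  then have choose_le: "real (n choose k) * p ^ k \<le> q ^ k / fact k"
    by (simp add: q_def field_simps power_mult_distrib)
  have "real k ^ (m - k) \<le> q ^ (m - k)"
    using assms(2,3) by (intro power_mono) (auto simp: q_def)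
  have "real (n choose k) * real k ^ m * p ^ k
      = (real (n choose k) * p ^ k) * real k ^ k * real k ^ (m - k)"
    using assms(3) by (simp add: mult_ac flip: power_add)
  also have "\<dots> \<le> (q ^ k / fact k) * real k ^ k * q ^ (m - k)"
    using choose_le \<open>real k ^ (m - k) \<le> q ^ (m - k)\<close> \<open>q \<ge> 0\<close> by (intro mult_mono) auto
  also have "\<dots> = q ^ m * (real k ^ k / fact k)"
    using assms(3) by (simp add: field_simps flip: power_add)
  also have "\<dots> \<le> q ^ m * exp (real k)"
    using pow_div_fact_le_exp[of "real k" k] \<open>q \<ge> 0\<close> by (intro mult_left_mono) auto
  also have "\<dots> \<le> q ^ m * exp 1 ^ m"
    using assms(3) \<open>q \<ge> 0\<close> by (intro mult_left_mono) (auto simp flip: exp_of_nat_mult)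
  finally show ?thesis by (simp add: q_def power_mult_distrib mult_ac)
qed

lemma sum_choose_mult_power_le:
  fixes p :: real
  assumes "0 \<le> p" and "real m \<le> real n * p" and "1 \<le> m"
  shows "(\<Sum>k=0..m. real (n choose k) * real k ^ m * p ^ k) \<le> (2 * exp 1 * (real n * p)) ^ m"
proof -
  have "(\<Sum>k=0..m. real (n choose k) * real k ^ m * p ^ k) \<le> (\<Sum>k=0..m. (exp 1 * (real n * p)) ^ m)"
    by (intro sum_mono choose_mult_power_le assms) auto
  also have "\<dots> = real (m + 1) * (exp 1 * (real n * p)) ^ m"
    by simp
  also have "\<dots> \<le> 2 ^ m * (exp 1 * (real n * p)) ^ m"
  proof (rule mult_right_mono)
    have "m + 1 \<le> 2 ^ m" using Suc_leI[OF less_exp[of m]] by simp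
    then show "real (m + 1) \<le> 2 ^ m" by (metis of_nat_le_iff of_nat_numeral of_nat_power)
  qed (use assms(1) in simp)
  finally show ?thesis by (simp add: power_mult_distrib mult_ac)
qed

context prob_space
begin

lemma integrable_prod_unit_interval:
  fixes Y :: "'b \<Rightarrow> 'a \<Rightarrow> real"
  assumes "\<And>j. j \<in> J \<Longrightarrow> Y j \<in> borel_measurable M"
    and "\<And>j x. j \<in> J \<Longrightarrow> x \<in> space M \<Longrightarrow> 0 \<le> Y j x \<and> Y j x \<le> 1"
  shows "integrable M (\<lambda>x. \<Prod>j\<in>J. Y j x)"
proof (rule integrable_const_bound[where B=1])
  show "AE x in M. norm (\<Prod>j\<in>J. Y j x) \<le> 1"
  proof (rule AE_I2)
    fix x assume "x \<in> space M"
    then have "0 \<le> (\<Prod>j\<in>J. Y j x)" and "(\<Prod>j\<in>J. Y j x) \<le> 1"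
      using assms(2) by (auto intro: prod_nonneg prod_le_1)
    then show "norm (\<Prod>j\<in>J. Y j x) \<le> 1" by simp
  qed
qed (use assms(1) in measurable)

lemma integrable_power_sum_unit_interval:
  fixes X :: "'b \<Rightarrow> 'a \<Rightarrow> real"
  assumes "finite I" and "\<And>i. i \<in> I \<Longrightarrow> X i \<in> borel_measurable M"
    and "\<And>i x. i \<in> I \<Longrightarrow> x \<in> space M \<Longrightarrow> 0 \<le> X i x \<and> X i x \<le> 1"
  shows "integrable M (\<lambda>x. (\<Sum>i\<in>I. X i x) ^ m)"
proof -
  have "integrable M (\<lambda>x. \<Sum>f\<in>PiE {..<m} (\<lambda>_. I). \<Prod>j<m. X (f j) x)"
    using assms by (intro Bochner_Integration.integrable_sum integrable_prod_unit_interval)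
      (auto simp: PiE_def Pi_def)
  then show ?thesis by (simp add: power_sum_eq_sum_PiE[OF assms(1)])
qed

lemma expectation_power_sum_le_sum_PiE:
  fixes X :: "'b \<Rightarrow> 'a \<Rightarrow> real"
  assumes "finite I" and "\<And>i. i \<in> I \<Longrightarrow> X i \<in> borel_measurable M"
    and "\<And>i x. i \<in> I \<Longrightarrow> x \<in> space M \<Longrightarrow> 0 \<le> X i x \<and> X i x \<le> 1"
    and moments: "\<And>A. A \<subseteq> I \<Longrightarrow> card A \<le> m \<Longrightarrow>
           expectation (\<lambda>x. \<Prod>i\<in>A. X i x) \<le> p ^ card A"
  shows "expectation (\<lambda>x. (\<Sum>i\<in>I. X i x) ^ m)
           \<le> (\<Sum>f\<in>PiE {..<m} (\<lambda>_. I). p ^ card (f ` {..<m}))"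
proof -
  let ?P = "PiE {..<m} (\<lambda>_. I)"
  have range: "f ` {..<m} \<subseteq> I" if "f \<in> ?P" for f
    using that by auto
  have "expectation (\<lambda>x. (\<Sum>i\<in>I. X i x) ^ m)
      = (\<Sum>f\<in>?P. expectation (\<lambda>x. \<Prod>j<m. X (f j) x))"
    unfolding power_sum_eq_sum_PiE[OF assms(1)] using assms
    by (intro Bochner_Integration.integral_sum integrable_prod_unit_interval)
      (auto simp: PiE_def Pi_def)
  also have "\<dots> \<le> (\<Sum>f\<in>?P. p ^ card (f ` {..<m}))"
  proof (rule sum_mono)
    fix f assume f: "f \<in> ?P"
    have "expectation (\<lambda>x. \<Prod>j<m. X (f j) x) \<le> expectation (\<lambda>x. \<Prod>i\<in>f ` {..<m}. X i x)"
      using assms range[OF f]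
      by (intro integral_mono integrable_prod_unit_interval prod_comp_le_prod_image) auto
    also have "\<dots> \<le> p ^ card (f ` {..<m})"
      using moments[OF range[OF f]] card_image_le[of "{..<m}" f] by simp
    finally show "expectation (\<lambda>x. \<Prod>j<m. X (f j) x) \<le> p ^ card (f ` {..<m})" .
  qed
  finally show ?thesis .
qed

lemma expectation_power_sum_le:
  fixes X :: "'b \<Rightarrow> 'a \<Rightarrow> real"
  assumes "finite I" and "\<And>i. i \<in> I \<Longrightarrow> X i \<in> borel_measurable M"
    and "\<And>i x. i \<in> I \<Longrightarrow> x \<in> space M \<Longrightarrow> 0 \<le> X i x \<and> X i x \<le> 1"
    and "\<And>A. A \<subseteq> I \<Longrightarrow> card A \<le> m \<Longrightarrow>
           expectation (\<lambda>x. \<Prod>i\<in>A. X i x) \<le> p ^ card A"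
    and "0 \<le> p" and "1 \<le> m" and "real m \<le> real (card I) * p"
  shows "expectation (\<lambda>x. (\<Sum>i\<in>I. X i x) ^ m) \<le> (2 * exp 1 * (real (card I) * p)) ^ m"
proof -
  have "expectation (\<lambda>x. (\<Sum>i\<in>I. X i x) ^ m)
      \<le> (\<Sum>f\<in>PiE {..<m} (\<lambda>_. I). p ^ card (f ` {..<m}))"
    using assms(1-4) by (rule expectation_power_sum_le_sum_PiE)
  also have "\<dots> \<le> (\<Sum>k=0..m. real (card I choose k) * real k ^ m * p ^ k)"
    using assms(1,5) by (rule sum_PiE_power_card_image_le)
  also have "\<dots> \<le> (2 * exp 1 * (real (card I) * p)) ^ m"
    using assms(5,7,6) by (rule sum_choose_mult_power_le)
  finally show ?thesis .
qed

lemma prob_ge_le_moment: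
  assumes "integrable M (\<lambda>x. S x ^ m)" and "\<And>x. x \<in> space M \<Longrightarrow> 0 \<le> S x" and "0 < t"
  shows "prob {x \<in> space M. t \<le> S x} \<le> expectation (\<lambda>x. S x ^ m) / t ^ m"
proof -
  have "prob {x \<in> space M. t \<le> S x} \<le> prob {x \<in> space M. t ^ m \<le> S x ^ m}"
    using assms(1,3) by (intro finite_measure_mono) (auto intro: power_mono)
  also have "\<dots> \<le> expectation (\<lambda>x. S x ^ m) / t ^ m"
    using assms by (intro integral_Markov_inequality_measure[where A="space M"]) auto
  finally show ?thesis .
qed

lemma prob_ge_mult_le_of_moment_le:
  assumes "integrable M (\<lambda>x. S x ^ m)" and "\<And>x. x \<in> space M \<Longrightarrow> 0 \<le> S x"
    and "expectation (\<lambda>x. S x ^ m) \<le> (C * q) ^ m" and "0 < q" and "0 < \<alpha>"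
  shows "prob {x \<in> space M. \<alpha> * q \<le> S x} \<le> (C / \<alpha>) ^ m"
proof -
  have "prob {x \<in> space M. \<alpha> * q \<le> S x} \<le> expectation (\<lambda>x. S x ^ m) / (\<alpha> * q) ^ m"
    using assms(1,2,4,5) by (intro prob_ge_le_moment) auto
  also have "\<dots> \<le> (C * q) ^ m / (\<alpha> * q) ^ m"
    using assms(3-5) by (simp add: divide_right_mono)
  also have "\<dots> = (C / \<alpha>) ^ m"
    using assms(4) by (simp add: power_divide power_mult_distrib)
  finally show ?thesis .
qed

end

theorem mainTheorem6:
  fixes M :: "'a measure" and X :: "nat \<Rightarrow> 'a \<Rightarrow> real"
    and n m :: nat and p :: real
  assumes "prob_space M"
    and "\<And>i. i \<in> {1..n} \<Longrightarrow> X i \<in> borel_measurable M"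
    and "\<And>i x. i \<in> {1..n} \<Longrightarrow> x \<in> space M \<Longrightarrow> 0 \<le> X i x \<and> X i x \<le> 1"
    and "m \<ge> 2" and "0 \<le> p" and "p \<le> 1"
    and "\<And>A. A \<subseteq> {1..n} \<Longrightarrow> card A \<le> m \<Longrightarrow>
           prob_space.expectation M (\<lambda>x. \<Prod>i\<in>A. X i x) \<le> p ^ card A"
    and "real m \<le> real n * p"
  shows "prob_space.expectation M (\<lambda>x. (\<Sum>i=1..n. X i x) ^ m) \<le> (2 * exp 2 * real n * p) ^ m
     \<and> (\<forall>\<alpha>>0. prob_space.prob M {x \<in> space M. (\<Sum>i=1..n. X i x) \<ge> \<alpha> * real n * p}
            \<le> (2 * exp 2 / \<alpha>) ^ m)"
proof -
  interpret prob_space M by fact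
  let ?S = "\<lambda>x. \<Sum>i=1..n. X i x"
  have "expectation (\<lambda>x. ?S x ^ m) \<le> (2 * exp 1 * (real n * p)) ^ m"
    using expectation_power_sum_le[of "{1..n}" X m p] assms by simp
  also have "\<dots> \<le> (2 * exp 2 * (real n * p)) ^ m"
    using assms(5) by (intro power_mono mult_right_mono) auto
  finally have moment: "expectation (\<lambda>x. ?S x ^ m) \<le> (2 * exp 2 * (real n * p)) ^ m" .
  have "integrable M (\<lambda>x. ?S x ^ m)"
    by (rule integrable_power_sum_unit_interval) (use assms(2,3) in auto)
  moreover have "\<And>x. x \<in> space M \<Longrightarrow> 0 \<le> ?S x"
    using assms(3) by (auto intro: sum_nonneg)
  moreover have "real n * p > 0"
    using assms(4,8) by linarith
  ultimately have "prob {x \<in> space M. \<alpha> * (real n * p) \<le> ?S x} \<le> (2 * exp 2 / \<alpha>) ^ m"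
    if "\<alpha> > 0" for \<alpha>
    using moment that by (intro prob_ge_mult_le_of_moment_le)
  with moment show ?thesis
    by (simp add: mult.assoc)
qed

end
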